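(* Let $n\in\mathbb{N}$, $\varkappa\in\mathbb{N}^n$, $N=|\varkappa|$. Then $\det M(y,\varkappa)=\det G_\emptyset(y,\varkappa)$.
   Context: $\operatorname{e}_m$ is the elementary symmetric polynomial of degree $m$, zero for $m<0$ or $m$ larger than the number of variables. For a list of nonnegative integers $\mu$, $y^{[\mu]}$ is the list in which $y_1$ is repeated $\mu_1$ times, then $y_2$ repeated $\mu_2$ times, etc.; $b_q$ is the $q$th standard unit vector in $\mathbb{Z}^n$. Each $p\in\{1,\ldots,N\}$ is written uniquely as $p=\varkappa_1+\cdots+\varkappa_{q-1}+r$ with $1\le q\le n$, $1\le r\le\varkappa_q$. $M(y,\varkappa)$ is the $N\times N$ matrix with $M(y,\varkappa)_{k,p}=(-1)^{N-k-r+1}\operatorname{e}_{N-k-r+1}(y^{[\varkappa-rb_q]})$. $G_\emptyset(y,\varkappa)$ is the $N\times N$ confluent Vandermonde matrix with $(j,p)$ entry $\binom{N-j}{r-1}y_q^{N-j-r+1}$ if $N-j-r+1\ge0$ and $0$ otherwise. *)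

theory Defs
  imports "Jordan_Normal_Form.Determinant"
begin

definition esym :: "int \<Rightarrow> 'a::comm_ring_1 list \<Rightarrow> 'a" where
  "esym m xs = (if m < 0 then 0 else
     (\<Sum>S\<in>{S. S \<subseteq> {0..<length xs} \<and> card S = nat m}. \<Prod>i\<in>S. xs ! i))"

text \<open>y^[mu]: y_1 repeated mu_1 times, then y_2 repeated mu_2 times, etc.
  (indices 0-based: the variable y_{q+1} of the paper is y q).\<close>
definition rep_list :: "(nat \<Rightarrow> 'a) \<Rightarrow> nat list \<Rightarrow> 'a list" where
  "rep_list y mu = concat (map (\<lambda>q. replicate (mu ! q) (y q)) [0..<length mu])"

text \<open>Decomposition p = kappa_1 + ... + kappa_(q-1) + r with 1 <= r <= kappa_q.
  Returned q is 0-based (paper's q minus 1), r as in the paper.\<close>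
definition decomp :: "nat list \<Rightarrow> nat \<Rightarrow> nat \<times> nat" where
  "decomp kappa p = (THE (q, r). q < length kappa \<and> 1 \<le> r \<and> r \<le> kappa ! q \<and>
                        p = sum_list (take q kappa) + r)"

text \<open>M(y,kappa), entries (k,p) with k,p in 1..N stored at 0-based position (k-1,p-1).\<close>
definition M_mat :: "(nat \<Rightarrow> 'a::comm_ring_1) \<Rightarrow> nat list \<Rightarrow> 'a mat" where
  "M_mat y kappa = (let N = sum_list kappa in
     mat N N (\<lambda>(i, j). let k = i + 1; p = j + 1; (q, r) = decomp kappa p;
                          m = int N - int k - int r + 1 in
        (-1) ^ nat m * esym m (rep_list y (kappa[q := kappa ! q - r]))))"

definition G_mat :: "(nat \<Rightarrow> 'a::comm_ring_1) \<Rightarrow> nat list \<Rightarrow> 'a mat" where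
  "G_mat y kappa = (let N = sum_list kappa in
     mat N N (\<lambda>(i, j'). let j = i + 1; p = j' + 1; (q, r) = decomp kappa p;
                          m = int N - int j - int r + 1 in
        (if m \<ge> 0 then of_nat ((N - j) choose (r - 1)) * y q ^ nat m else 0)))"

end

theory Submission
  imports Defs "HOL-Computational_Algebra.Formal_Power_Series"
begin

text \<open>Put \<open>F(t) = \<Prod>\<^sub>q (1 - y\<^sub>q t)\<^bsup>\<kappa>\<^sub>q\<^esup>\<close>. The signed elementary symmetric polynomials
  \<open>(-1)\<^sup>m e\<^sub>m(y\<^bsup>[\<kappa> - r b\<^sub>q]\<^esup>)\<close> are the coefficients of \<open>F(t) (1 - y\<^sub>q t)\<^bsup>-r\<^esup>\<close>, and
  \<open>(1 - y\<^sub>q t)\<^bsup>-r\<^esup>\<close> has coefficients \<open>binom(m + r - 1, m) y\<^sub>q\<^sup>m\<close>. Comparing coefficients gives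
  \<open>M = U G\<^sub>\<emptyset>\<close>, where \<open>U\<close> is the upper triangular Toeplitz matrix of the coefficients of \<open>F\<close>;
  its diagonal is \<open>F(0) = 1\<close>, so \<open>det U = 1\<close>.\<close>

definition lin_fps :: "'a::comm_ring_1 \<Rightarrow> 'a fps" where
  "lin_fps c = 1 - fps_const c * fps_X"

definition inv_lin_pow_fps :: "'a::comm_ring_1 \<Rightarrow> nat \<Rightarrow> 'a fps" where
  "inv_lin_pow_fps a r = Abs_fps (\<lambda>m. of_nat ((m + r - 1) choose m) * a ^ m)"

definition lin_prod_fps :: "(nat \<Rightarrow> 'a::comm_ring_1) \<Rightarrow> nat list \<Rightarrow> 'a fps" where
  "lin_prod_fps y ks = (\<Prod>q<length ks. lin_fps (y q) ^ (ks ! q))"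

definition upper_toeplitz_mat :: "nat \<Rightarrow> 'a::comm_ring_1 fps \<Rightarrow> 'a mat" where
  "upper_toeplitz_mat N f = mat N N (\<lambda>(i, l). if i \<le> l then fps_nth f (l - i) else 0)"

lemma fps_nth_prod_list_lin_fps:
  fixes xs :: "'a::comm_ring_1 list"
  shows "fps_nth (prod_list (map lin_fps xs)) m = (-1) ^ m * esym (int m) xs"
proof -
  let ?A = "{0..<length xs}"
  have "prod_list (map lin_fps xs) = (\<Prod>i\<in>?A. fps_const (- xs ! i) * fps_X + 1)"
    by (simp add: prod.list_conv_set_nth lin_fps_def del: fps_const_neg add: fps_const_neg[symmetric])
  also have "\<dots> = (\<Sum>B\<in>Pow ?A. (\<Prod>i\<in>B. fps_const (- xs ! i) * fps_X) * (\<Prod>i\<in>?A - B. 1))"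
    by (rule prod_add) simp
  also have "\<dots> = (\<Sum>B\<in>Pow ?A. fps_const (\<Prod>i\<in>B. - xs ! i) * fps_X ^ card B)"
  proof (rule sum.cong[OF refl])
    fix B assume "B \<in> Pow ?A"
    then have "finite B" by (meson PowD finite_atLeastLessThan finite_subset)
    then show "(\<Prod>i\<in>B. fps_const (- xs ! i) * fps_X) * (\<Prod>i\<in>?A - B. 1)
        = fps_const (\<Prod>i\<in>B. - xs ! i) * fps_X ^ card B"
      by (induction B rule: finite_induct) (auto simp: algebra_simps)
  qed
  finally have "fps_nth (prod_list (map lin_fps xs)) m
      = (\<Sum>B\<in>Pow ?A. if card B = m then \<Prod>i\<in>B. - xs ! i else 0)"
    by (auto simp: fps_sum_nth fps_mult_left_const_nth intro!: sum.cong)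
  also have "\<dots> = (\<Sum>B\<in>{B. B \<subseteq> ?A \<and> card B = m}. (-1) ^ m * (\<Prod>i\<in>B. xs ! i))"
    by (subst sum.inter_filter[symmetric]) (auto simp: prod_uminus intro!: sum.cong)
  also have "\<dots> = (-1) ^ m * esym (int m) xs"
    by (simp add: esym_def sum_distrib_left)
  finally show ?thesis .
qed

lemma inv_lin_pow_fps_Suc_mult: "inv_lin_pow_fps a (Suc r) * lin_fps a = inv_lin_pow_fps a r"
proof (rule fps_ext)
  fix m
  have expand: "inv_lin_pow_fps a (Suc r) * lin_fps a
      = inv_lin_pow_fps a (Suc r) - fps_const a * (fps_X * inv_lin_pow_fps a (Suc r))"
    by (simp add: lin_fps_def algebra_simps)
  show "fps_nth (inv_lin_pow_fps a (Suc r) * lin_fps a) m = fps_nth (inv_lin_pow_fps a r) m"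
  proof (cases m)
    case 0
    then show ?thesis by (simp add: expand inv_lin_pow_fps_def lin_fps_def)
  next
    case (Suc k)
    have "(Suc k + r) choose Suc k = ((k + r) choose Suc k) + ((k + r) choose k)"
      by simp
    then have "of_nat ((Suc k + r) choose Suc k) * a ^ Suc k - a * (of_nat ((k + r) choose k) * a ^ k)
        = of_nat ((Suc k + r - 1) choose Suc k) * (a ^ Suc k :: 'a)"
      by (simp add: algebra_simps)
    then show ?thesis
      unfolding expand by (simp add: inv_lin_pow_fps_def Suc fps_X_mult_nth)
  qed
qed

lemma inv_lin_pow_fps_mult_power: "inv_lin_pow_fps a r * lin_fps a ^ r = 1"
proof (induction r)
  case 0
  show ?case by (rule fps_ext) (auto simp: inv_lin_pow_fps_def binomial_eq_0)
next
  case (Suc r)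
  have "inv_lin_pow_fps a (Suc r) * lin_fps a ^ Suc r
      = (inv_lin_pow_fps a (Suc r) * lin_fps a) * lin_fps a ^ r"
    by (simp add: algebra_simps)
  with Suc show ?case by (simp add: inv_lin_pow_fps_Suc_mult)
qed

lemma prod_list_map_rep_list:
  fixes f :: "'a \<Rightarrow> 'b::comm_monoid_mult"
  shows "prod_list (map f (rep_list y ks)) = (\<Prod>q<length ks. f (y q) ^ (ks ! q))"
proof -
  have "prod_list (map f (concat xss)) = prod_list (map (\<lambda>xs. prod_list (map f xs)) xss)" for xss
    by (induction xss) auto
  moreover have "prod_list (map h [0..<n]) = (\<Prod>q<n. h q)" for h :: "nat \<Rightarrow> 'b" and n
    by (induction n) (auto simp: lessThan_Suc mult.commute)
  ultimately show ?thesis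
    by (simp add: rep_list_def o_def)
qed

lemma prod_power_list_update_minus:
  fixes g :: "nat \<Rightarrow> 'a::comm_monoid_mult"
  assumes "q0 < length ks" "r \<le> ks ! q0"
  shows "(\<Prod>q<length ks. g q ^ (ks[q0 := ks ! q0 - r] ! q)) * g q0 ^ r
       = (\<Prod>q<length ks. g q ^ (ks ! q))"
proof -
  have q0: "q0 \<in> {..<length ks}" using assms by simp
  have rest: "(\<Prod>q\<in>{..<length ks} - {q0}. g q ^ (ks[q0 := ks ! q0 - r] ! q))
      = (\<Prod>q\<in>{..<length ks} - {q0}. g q ^ (ks ! q))"
    by (rule prod.cong) auto
  have "g q0 ^ r * g q0 ^ (ks ! q0 - r) = g q0 ^ (ks ! q0)"
    using assms by (simp add: power_add[symmetric])
  then show ?thesis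
    using prod.remove[OF _ q0, of "\<lambda>q. g q ^ (ks[q0 := ks ! q0 - r] ! q)"]
      prod.remove[OF _ q0, of "\<lambda>q. g q ^ (ks ! q)"] assms
    by (simp add: rest mult.assoc[symmetric] mult.commute[of _ "g q0 ^ r"])
qed

lemma signed_esym_reduced_eq_nth_mult_inv_lin_pow:
  assumes "q0 < length ks" "r \<le> ks ! q0"
  shows "(-1) ^ m * esym (int m) (rep_list y (ks[q0 := ks ! q0 - r]))
       = fps_nth (lin_prod_fps y ks * inv_lin_pow_fps (y q0) r) m"
proof -
  let ?Q = "\<Prod>q<length ks. lin_fps (y q) ^ (ks[q0 := ks ! q0 - r] ! q)"
  have "?Q = ?Q * (lin_fps (y q0) ^ r * inv_lin_pow_fps (y q0) r)"
    using inv_lin_pow_fps_mult_power[of "y q0" r] by (simp add: mult.commute)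
  also have "\<dots> = lin_prod_fps y ks * inv_lin_pow_fps (y q0) r"
    using prod_power_list_update_minus[OF assms, of "\<lambda>q. lin_fps (y q)"]
    by (simp add: lin_prod_fps_def mult.assoc[symmetric])
  finally show ?thesis
    using fps_nth_prod_list_lin_fps[of "rep_list y (ks[q0 := ks ! q0 - r])" m]
    by (simp add: prod_list_map_rep_list)
qed

lemma fps_nth_lin_prod_fps_0: "fps_nth (lin_prod_fps y ks) 0 = 1"
proof -
  have "fps_nth (\<Prod>q<n. lin_fps (y q) ^ (ks ! q)) 0 = 1" for n
    by (induction n) (simp_all add: lessThan_Suc fps_power_zeroth lin_fps_def)
  then show ?thesis by (simp add: lin_prod_fps_def)
qed

lemma upper_toeplitz_mat_carrier: "upper_toeplitz_mat N f \<in> carrier_mat N N"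
  by (simp add: upper_toeplitz_mat_def)

lemma det_upper_toeplitz_mat:
  assumes "fps_nth f 0 = 1"
  shows "det (upper_toeplitz_mat N f) = 1"
proof -
  have "upper_triangular (upper_toeplitz_mat N f)"
    by (rule upper_triangularI) (simp add: upper_toeplitz_mat_def)
  then have "det (upper_toeplitz_mat N f) = prod_list (diag_mat (upper_toeplitz_mat N f))"
    using det_upper_triangular upper_toeplitz_mat_carrier by blast
  then show ?thesis
    by (simp add: prod_list_diag_prod upper_toeplitz_mat_def assms)
qed

text \<open>For \<open>r = 0\<close> the convolution would need the term \<open>l = N\<close>, which lies outside the matrix.\<close>
lemma upper_toeplitz_conv:
  fixes f g :: "'a::comm_ring_1 fps"
  assumes "1 \<le> r"
  shows "(\<Sum>l<N. (if i \<le> l then fps_nth f (l - i) else 0)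
                   * (if l + r \<le> N then fps_nth g (N - l - r) else 0))
       = (if i + r \<le> N then fps_nth (f * g) (N - i - r) else 0)"
proof (cases "i + r \<le> N")
  case False
  then show ?thesis by (auto intro!: sum.neutral)
next
  case True
  define K where "K = N - i - r"
  have "(\<Sum>l<N. (if i \<le> l then fps_nth f (l - i) else 0)
                 * (if l + r \<le> N then fps_nth g (N - l - r) else 0))
      = (\<Sum>l\<in>(+) i ` {0..K}. fps_nth f (l - i) * fps_nth g (N - l - r))"
    using assms True
    by (intro sum.mono_neutral_cong_right) (auto simp: K_def image_iff intro: exI[of _ "_ - i"])
  also have "\<dots> = (\<Sum>s=0..K. fps_nth f s * fps_nth g (K - s))"
    by (subst sum.reindex) (auto simp: K_def add_ac intro!: sum.cong)
  finally show ?thesis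
    using True by (simp add: fps_mult_nth K_def)
qed

lemma sum_take_index_lt:
  fixes ks :: "nat list"
  assumes "q1 < q2" "q2 < length ks" "r1 \<le> ks ! q1" "1 \<le> r2"
  shows "sum_list (take q1 ks) + r1 < sum_list (take q2 ks) + r2"
proof -
  have "take q2 ks = take (Suc q1) ks @ take (q2 - Suc q1) (drop (Suc q1) ks)"
    using assms take_add[of "Suc q1" "q2 - Suc q1" ks] by simp
  then have "sum_list (take q1 ks) + ks ! q1 \<le> sum_list (take q2 ks)"
    using assms by (simp add: take_Suc_conv_app_nth)
  then show ?thesis using assms by simp
qed

lemma decomp_exists:
  fixes ks :: "nat list"
  assumes "1 \<le> p" "p \<le> sum_list ks"
  shows "\<exists>q r. q < length ks \<and> 1 \<le> r \<and> r \<le> ks ! q \<and> p = sum_list (take q ks) + r"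
  using assms
proof (induction ks arbitrary: p)
  case Nil
  then show ?case by simp
next
  case (Cons a ks)
  show ?case
  proof (cases "p \<le> a")
    case True
    with Cons.prems show ?thesis by (intro exI[of _ 0] exI[of _ p]) auto
  next
    case False
    with Cons.prems have "1 \<le> p - a" "p - a \<le> sum_list ks" by auto
    with Cons.IH[of "p - a"] obtain q r where
      "q < length ks" "1 \<le> r" "r \<le> ks ! q" "p - a = sum_list (take q ks) + r"
      by blast
    with False show ?thesis by (intro exI[of _ "Suc q"] exI[of _ r]) auto
  qed
qed

lemma decomp_bounds:
  assumes "1 \<le> p" "p \<le> sum_list ks" "decomp ks p = (q, r)"
  shows "q < length ks" "1 \<le> r" "r \<le> ks ! q"
proof -
  let ?P = "\<lambda>(q, r). q < length ks \<and> 1 \<le> r \<and> r \<le> ks ! q \<and> p = sum_list (take q ks) + r"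
  have "\<exists>!x. ?P x"
  proof (rule ex_ex1I)
    show "\<exists>x. ?P x" using decomp_exists[OF assms(1,2)] by auto
  next
    fix x z assume "?P x" "?P z"
    moreover obtain q1 r1 q2 r2 where "x = (q1, r1)" "z = (q2, r2)" by force
    ultimately show "x = z"
      using sum_take_index_lt[of q1 q2 ks r1 r2] sum_take_index_lt[of q2 q1 ks r2 r1]
      by (cases q1 q2 rule: linorder_cases) auto
  qed
  then have "?P (decomp ks p)"
    unfolding decomp_def by (rule theI')
  with assms(3) show "q < length ks" "1 \<le> r" "r \<le> ks ! q" by auto
qed

lemma G_mat_index:
  assumes "l < sum_list ks" "j < sum_list ks" "decomp ks (j + 1) = (q, r)" "1 \<le> r"
  shows "G_mat y ks $$ (l, j)
       = (if l + r \<le> sum_list ks then fps_nth (inv_lin_pow_fps (y q) r) (sum_list ks - l - r) else 0)"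
proof -
  have raw: "G_mat y ks $$ (l, j) = (if int (sum_list ks) - int (l + 1) - int r + 1 \<ge> 0
      then of_nat ((sum_list ks - (l + 1)) choose (r - 1)) * y q ^ nat (int (sum_list ks) - int (l + 1) - int r + 1)
      else 0)"
    using assms by (simp only: G_mat_def Let_def index_mat(1) prod.case)
  show ?thesis
  proof (cases "l + r \<le> sum_list ks")
    case True
    then have "int (sum_list ks) - int (l + 1) - int r + 1 = int (sum_list ks - l - r)" by simp
    moreover have "(sum_list ks - (l + 1)) choose (r - 1)
        = (sum_list ks - l - r + r - 1) choose (sum_list ks - l - r)"
      using True assms(4) binomial_symmetric[of "r - 1" "sum_list ks - (l + 1)"] by simp
    ultimately show ?thesis
      using True by (simp only: raw nat_int of_nat_0_le_iff if_True) (simp add: inv_lin_pow_fps_def)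
  next
    case False
    then show ?thesis by (simp add: raw)
  qed
qed

lemma M_mat_index:
  assumes "i < sum_list ks" "j < sum_list ks" "decomp ks (j + 1) = (q, r)"
    and "q < length ks" "1 \<le> r" "r \<le> ks ! q"
  shows "M_mat y ks $$ (i, j)
       = (if i + r \<le> sum_list ks
          then fps_nth (lin_prod_fps y ks * inv_lin_pow_fps (y q) r) (sum_list ks - i - r)
          else 0)"
proof (cases "i + r \<le> sum_list ks")
  case True
  then have "int (sum_list ks) - int (i + 1) - int r + 1 = int (sum_list ks - i - r)" by simp
  with assms have "M_mat y ks $$ (i, j)
      = (-1) ^ (sum_list ks - i - r) * esym (int (sum_list ks - i - r)) (rep_list y (ks[q := ks ! q - r]))"
    by (simp only: M_mat_def Let_def index_mat(1) prod.case nat_int)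
  with True show ?thesis
    using signed_esym_reduced_eq_nth_mult_inv_lin_pow[OF assms(4,6), of "sum_list ks - i - r" y]
    by simp
next
  case False
  with assms show ?thesis by (simp add: M_mat_def Let_def esym_def)
qed

lemma M_mat_eq_upper_toeplitz_mult_G_mat:
  "M_mat y ks = upper_toeplitz_mat (sum_list ks) (lin_prod_fps y ks) * G_mat y ks"
  (is "_ = ?U * _")
proof (rule eq_matI)
  fix i j assume "i < dim_row (?U * G_mat y ks)" "j < dim_col (?U * G_mat y ks)"
  then have ij: "i < sum_list ks" "j < sum_list ks"
    by (simp_all add: upper_toeplitz_mat_def G_mat_def Let_def)
  obtain q r where d: "decomp ks (j + 1) = (q, r)" by fastforce
  have qr: "q < length ks" "1 \<le> r" "r \<le> ks ! q"
    using decomp_bounds[OF _ _ d] ij by auto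
  have "(?U * G_mat y ks) $$ (i, j) = (\<Sum>l<sum_list ks. ?U $$ (i, l) * G_mat y ks $$ (l, j))"
    using ij by (simp add: upper_toeplitz_mat_def G_mat_def Let_def scalar_prod_def atLeast0LessThan)
  also have "\<dots> = (\<Sum>l<sum_list ks. (if i \<le> l then fps_nth (lin_prod_fps y ks) (l - i) else 0)
      * (if l + r \<le> sum_list ks then fps_nth (inv_lin_pow_fps (y q) r) (sum_list ks - l - r) else 0))"
    using ij d qr by (intro sum.cong) (simp_all add: upper_toeplitz_mat_def G_mat_index)
  also have "\<dots> = M_mat y ks $$ (i, j)"
    using ij d qr by (simp add: upper_toeplitz_conv M_mat_index)
  finally show "M_mat y ks $$ (i, j) = (?U * G_mat y ks) $$ (i, j)" ..
qed (simp_all add: M_mat_def G_mat_def upper_toeplitz_mat_def Let_def)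

theorem mainTheorem4:
  fixes y :: "nat \<Rightarrow> 'a::comm_ring_1" and kappa :: "nat list" and n :: nat
  assumes "length kappa = n"
  shows "det (M_mat y kappa) = det (G_mat y kappa)"
proof -
  let ?U = "upper_toeplitz_mat (sum_list kappa) (lin_prod_fps y kappa)"
  have "G_mat y kappa \<in> carrier_mat (sum_list kappa) (sum_list kappa)"
    by (simp add: G_mat_def Let_def)
  then have "det (M_mat y kappa) = det ?U * det (G_mat y kappa)"
    unfolding M_mat_eq_upper_toeplitz_mult_G_mat by (rule det_mult[OF upper_toeplitz_mat_carrier])
  then show ?thesis
    by (simp add: det_upper_toeplitz_mat fps_nth_lin_prod_fps_0)
qed

end
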